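(* Let $X$ be a topological space and let $\mathcal{A}(X)\subset C(X)$ be a family with the $D$-property. Assume that the activation function $\sigma:\mathbb{R}\to\mathbb{R}$ satisfies the univariate universal approximation property. Let $m\ge 1$. Then for every compact set $K\subset X$, every $g\in C(K;\mathbb{R}^m)$ and every $\varepsilon>0$ there exists $H\in\mathcal{N}_1^{(m)}(\sigma)$ with $\sup_{x\in K}\|g(x)-H(x)\|_{\mathbb{R}^m}<\varepsilon$. Consequently, for every $l\ge1$, the class $\mathcal{N}_l^{(m)}(\sigma)$ is dense in $C(X;\mathbb{R}^m)$ (i.e. for every compact $K\subset X$, the restrictions to $K$ of elements of $\mathcal{N}_l^{(m)}(\sigma)$ are dense in $C(K;\mathbb{R}^m)$ with respect to the uniform norm on $K$).
   Context: $C(X)$ denotes the continuous real-valued functions on $X$, and $C(X;\mathbb{R}^m)$ the continuous maps $X\to\mathbb{R}^m$, topologized by uniform convergence on compact sets (seminorms $\|g\|_K=\sup_{x\in K}\|g(x)\|_{\mathbb{R}^m}$, $K$ compact, Euclidean norm). A family $\mathcal{A}(X)\subset C(X)$ (the "basic family" of admissible feature maps) has the $D$-property if for every compact $K\subset X$, every $g\in C(K)$ and every $\varepsilon>0$ there exist $M\in\mathbb{N}$, $f_1,\dots,f_M\in\mathcal{A}(X)$ and $u_1,\dots,u_M\in C(\mathbb{R})$ with $\max_{x\in K}|g(x)-\sum_{i=1}^M u_i(f_i(x))|<\varepsilon$. An activation $\sigma:\mathbb{R}\to\mathbb{R}$ satisfies the univariate universal approximation property if for every compact interval $[a,b]$,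 every $u\in C([a,b])$ and every $\varepsilon>0$ there are $N$ and $c_j,w_j,\theta_j\in\mathbb{R}$ with $\sup_{t\in[a,b]}|u(t)-\sum_{j=1}^N c_j\sigma(w_jt-\theta_j)|<\varepsilon$. For $l\ge1$, $m\ge1$, $\mathcal{N}_l^{(m)}(\sigma)$ (deep topological feedforward neural networks of depth $l$ with $m$ outputs, built from $\mathcal{A}(X)$) is the set of all maps $H:X\to\mathbb{R}^m$ of the form $H=T_{l+1}\circ\sigma\circ T_l\circ\sigma\circ\cdots\circ T_1\circ\sigma\circ T_0$, where $T_0(x)=(w_1f_1(x)-\theta_1,\dots,w_{k_0}f_{k_0}(x)-\theta_{k_0})$ with $f_i\in\mathcal{A}(X)$, $w_i,\theta_i\in\mathbb{R}$; $T_j(y)=A_jy-b_j$ are affine maps $\mathbb{R}^{k_{j-1}}\to\mathbb{R}^{k_j}$ for $j=1,\dots,l$; $T_{l+1}(y)=A_{l+1}y-b_{l+1}$ is an affine map $\mathbb{R}^{k_l}\to\mathbb{R}^m$; and $\sigma$ acts componentwise. For $l=1$ this is the same as maps $H(x)=A\sigma(T(x))-b$ with $T(x)=(w_1f_1(x)-\theta_1,\dots,w_rf_r(x)-\theta_r)$, $f_i\in\mathcal{A}(X)$, $A\in\mathbb{R}^{m\times r}$, $b\in\mathbb{R}^m$ (single hidden layer networks, since intermediate affine layers may be taken trivial). *)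

theory Defs
  imports "HOL-Analysis.Analysis"
begin

text \<open>The space X is the (whole) type 'a of class topological_space.
  Finite-dimensional hidden vectors of width k are represented as functions
  nat => real of which only the components i < k are used.
  A supremum condition "sup over S of h < eps" is written as
  "there is d < eps with h x <= d for all x in S".\<close>

definition D_property :: "('a::topological_space \<Rightarrow> real) set \<Rightarrow> bool" where
  "D_property \<A> \<longleftrightarrow>
     (\<forall>K g \<epsilon>. compact K \<and> continuous_on K g \<and> \<epsilon> > (0::real) \<longrightarrow>
        (\<exists>M::nat. \<exists>f u. (\<forall>i<M. f i \<in> \<A> \<and> continuous_on UNIV (u i :: real \<Rightarrow> real)) \<and>
           (\<exists>\<delta><\<epsilon>. \<forall>x\<in>K. \<bar>g x - (\<Sum>i<M. u i (f i x))\<bar> \<le> \<delta>)))"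

definition univariate_UAP :: "(real \<Rightarrow> real) \<Rightarrow> bool" where
  "univariate_UAP \<sigma> \<longleftrightarrow>
     (\<forall>a b u \<epsilon>. continuous_on {a..b} u \<and> \<epsilon> > (0::real) \<longrightarrow>
        (\<exists>N::nat. \<exists>c w \<theta>.
           \<exists>\<delta><\<epsilon>. \<forall>t\<in>{a..b}. \<bar>u t - (\<Sum>j<N. c j * \<sigma> (w j * t - \<theta> j))\<bar> \<le> \<delta>))"

text \<open>Hidden layers: hid j is the vector after the (j+1)-th application of sigma.
  hid 0 = sigma(z) with z = T_0(x); hid (j+1) = sigma(A_{j+1} (hid j) - b_{j+1}),
  where A_{j+1} maps R^{ks j} to R^{ks (j+1)}.\<close>

primrec hid :: "(real \<Rightarrow> real) \<Rightarrow> (nat \<Rightarrow> nat) \<Rightarrow> (nat \<Rightarrow> nat \<Rightarrow> nat \<Rightarrow> real)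
     \<Rightarrow> (nat \<Rightarrow> nat \<Rightarrow> real) \<Rightarrow> (nat \<Rightarrow> real) \<Rightarrow> nat \<Rightarrow> nat \<Rightarrow> real" where
  "hid \<sigma> ks As bs z 0 = (\<lambda>i. \<sigma> (z i))"
| "hid \<sigma> ks As bs z (Suc j) =
     (\<lambda>i. \<sigma> ((\<Sum>p<ks j. As (Suc j) i p * hid \<sigma> ks As bs z j p) - bs (Suc j) i))"

text \<open>Deep networks with l hidden layers (l applications of sigma), widths
  ks 0, ..., ks (l-1), and m outputs (m = CARD('m) >= 1). For l = 1 these are
  exactly the maps x |-> A sigma(T(x)) - b.\<close>

definition NN :: "('a::topological_space \<Rightarrow> real) set \<Rightarrow> (real \<Rightarrow> real) \<Rightarrow> nat
     \<Rightarrow> ('a \<Rightarrow> real ^ 'm::finite) set" where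
  "NN \<A> \<sigma> l = {H. \<exists>ks f w \<theta> As bs Aout bout.
      (\<forall>i<ks 0. f i \<in> \<A>) \<and>
      H = (\<lambda>x. (\<chi> r. (\<Sum>p<ks (l - 1).
                 Aout r p * hid \<sigma> ks As bs (\<lambda>i. w i * f i x - \<theta> i) (l - 1) p))
               - bout)}"

end

(* By the D-property, a continuous real function on a compact set K is uniformly close to
   a finite sum of functions x \<mapsto> u (f x) with f in \<A> and u continuous. As f maps K into
   a compact interval, the univariate approximation property replaces each u by a combination
   of neurons t \<mapsto> c \<sigma>(w t - \<theta>); applied to the coordinates of g this gives single hidden
   layer approximants. Depth grows one layer at a time: a depth-l network H close to g is
   bounded on K, and feeding every output coordinate of H through an approximation
   t \<approx> \<Sum>j c_j \<sigma>(\<alpha>_j t - \<beta>_j) of the identity on a bounding interval yields a network of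
   depth l + 1 that is uniformly close to H. *)

theory Submission
  imports Defs
begin

definition uniformly_approximable ::
    "'a set \<Rightarrow> ('a \<Rightarrow> 'b::real_normed_vector) set \<Rightarrow> ('a \<Rightarrow> 'b) \<Rightarrow> bool" where
  "uniformly_approximable K C g \<longleftrightarrow> (\<forall>\<epsilon>>0. \<exists>H\<in>C. \<forall>x\<in>K. norm (g x - H x) \<le> \<epsilon>)"

lemma uniformly_approximableI:
  "(\<And>\<epsilon>. \<epsilon> > 0 \<Longrightarrow> \<exists>H\<in>C. \<forall>x\<in>K. norm (g x - H x) \<le> \<epsilon>) \<Longrightarrow> uniformly_approximable K C g"
  unfolding uniformly_approximable_def by blast

lemma uniformly_approximableD:
  "uniformly_approximable K C g \<Longrightarrow> \<epsilon> > 0 \<Longrightarrow> \<exists>H\<in>C. \<forall>x\<in>K. norm (g x - H x) \<le> \<epsilon>"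
  unfolding uniformly_approximable_def by blast

lemma uniformly_approximable_strict:
  assumes "uniformly_approximable K C g" "\<epsilon> > 0"
  shows "\<exists>H\<in>C. \<exists>\<delta><\<epsilon>. \<forall>x\<in>K. norm (g x - H x) \<le> \<delta>"
proof -
  obtain H where "H \<in> C" "\<And>x. x \<in> K \<Longrightarrow> norm (g x - H x) \<le> \<epsilon> / 2"
    using uniformly_approximableD[OF assms(1), where \<epsilon> = "\<epsilon> / 2"] \<open>\<epsilon> > 0\<close> by auto
  then show ?thesis
    using \<open>\<epsilon> > 0\<close> by (intro bexI[of _ H] exI[of _ "\<epsilon> / 2"]) auto
qed

lemma uniformly_approximable_mono:
  "uniformly_approximable K C g \<Longrightarrow> C \<subseteq> C' \<Longrightarrow> uniformly_approximable K C' g"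
  unfolding uniformly_approximable_def by blast

lemma uniformly_approximable_trans:
  assumes "uniformly_approximable K C g" "\<And>H. H \<in> C \<Longrightarrow> uniformly_approximable K C' H"
  shows "uniformly_approximable K C' g"
proof (rule uniformly_approximableI)
  fix \<epsilon> :: real assume "\<epsilon> > 0"
  then obtain H where "H \<in> C" and H: "\<And>x. x \<in> K \<Longrightarrow> norm (g x - H x) \<le> \<epsilon> / 2"
    using uniformly_approximableD[OF assms(1), where \<epsilon> = "\<epsilon> / 2"] \<open>\<epsilon> > 0\<close> by auto
  then obtain H' where "H' \<in> C'" and H': "\<And>x. x \<in> K \<Longrightarrow> norm (H x - H' x) \<le> \<epsilon> / 2"
    using uniformly_approximableD[OF assms(2)[OF \<open>H \<in> C\<close>], where \<epsilon> = "\<epsilon> / 2"] \<open>\<epsilon> > 0\<close>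
    by auto
  have "norm (g x - H' x) \<le> \<epsilon>" if "x \<in> K" for x
    using norm_diff_triangle_le[OF H[OF that] H'[OF that]] by simp
  then show "\<exists>H\<in>C'. \<forall>x\<in>K. norm (g x - H x) \<le> \<epsilon>"
    using \<open>H' \<in> C'\<close> by blast
qed

lemma uniformly_approximable_bounded:
  assumes "uniformly_approximable K C g" "bounded (g ` K)"
  shows "uniformly_approximable K {H \<in> C. bounded (H ` K)} g"
proof (rule uniformly_approximableI)
  fix \<epsilon> :: real assume "\<epsilon> > 0"
  then obtain H where "H \<in> C" and H: "\<And>x. x \<in> K \<Longrightarrow> norm (g x - H x) \<le> \<epsilon>"
    using uniformly_approximableD[OF assms(1) \<open>\<epsilon> > 0\<close>] by blast
  obtain B where B: "\<And>x. x \<in> K \<Longrightarrow> norm (g x) \<le> B"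
    using assms(2) unfolding bounded_iff by blast
  have "norm (H x) \<le> B + \<epsilon>" if "x \<in> K" for x
    using norm_triangle_ineq2[of "H x" "g x"] norm_minus_commute[of "H x" "g x"] B[OF that] H[OF that]
    by linarith
  then have "bounded (H ` K)"
    unfolding bounded_iff by blast
  then show "\<exists>H\<in>{H \<in> C. bounded (H ` K)}. \<forall>x\<in>K. norm (g x - H x) \<le> \<epsilon>"
    using \<open>H \<in> C\<close> H by blast
qed

lemma uniformly_approximable_add:
  assumes "uniformly_approximable K C g" "uniformly_approximable K C h"
    and "\<And>G H. G \<in> C \<Longrightarrow> H \<in> C \<Longrightarrow> (\<lambda>x. G x + H x) \<in> C"
  shows "uniformly_approximable K C (\<lambda>x. g x + h x)"
proof (rule uniformly_approximableI)
  fix \<epsilon> :: real assume "\<epsilon> > 0"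
  then obtain G where "G \<in> C" and G: "\<And>x. x \<in> K \<Longrightarrow> norm (g x - G x) \<le> \<epsilon> / 2"
    using uniformly_approximableD[OF assms(1), where \<epsilon> = "\<epsilon> / 2"] \<open>\<epsilon> > 0\<close> by auto
  obtain H where "H \<in> C" and H: "\<And>x. x \<in> K \<Longrightarrow> norm (h x - H x) \<le> \<epsilon> / 2"
    using uniformly_approximableD[OF assms(2), where \<epsilon> = "\<epsilon> / 2"] \<open>\<epsilon> > 0\<close> by auto
  have "norm ((g x + h x) - (G x + H x)) \<le> \<epsilon>" if "x \<in> K" for x
    using norm_diff_triangle_ineq[of "g x" "h x" "G x" "H x"] G[OF that] H[OF that] by linarith
  then show "\<exists>F\<in>C. \<forall>x\<in>K. norm ((g x + h x) - F x) \<le> \<epsilon>"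
    using assms(3)[OF \<open>G \<in> C\<close> \<open>H \<in> C\<close>] by (intro bexI[of _ "\<lambda>x. G x + H x"]) auto
qed

lemma uniformly_approximable_sum:
  assumes "finite I" "(\<lambda>x. 0) \<in> C"
    and "\<And>G H. G \<in> C \<Longrightarrow> H \<in> C \<Longrightarrow> (\<lambda>x. G x + H x) \<in> C"
    and "\<And>i. i \<in> I \<Longrightarrow> uniformly_approximable K C (F i)"
  shows "uniformly_approximable K C (\<lambda>x. \<Sum>i\<in>I. F i x)"
  using assms(1,4)
proof (induction I rule: finite_induct)
  case empty
  show ?case
    using assms(2) by (intro uniformly_approximableI bexI[of _ "\<lambda>x. 0"]) auto
next
  case (insert i I)
  then show ?case
    by (simp add: uniformly_approximable_add assms(3))
qed

lemma uniformly_approximable_comp: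
  assumes "uniformly_approximable S C u" "f ` K \<subseteq> S"
  shows "uniformly_approximable K ((\<lambda>P x. P (f x)) ` C) (\<lambda>x. u (f x))"
proof (rule uniformly_approximableI)
  fix \<epsilon> :: real assume "\<epsilon> > 0"
  then obtain P where "P \<in> C" "\<forall>t\<in>S. norm (u t - P t) \<le> \<epsilon>"
    using uniformly_approximableD[OF assms(1)] by blast
  then show "\<exists>H\<in>(\<lambda>P x. P (f x)) ` C. \<forall>x\<in>K. norm (u (f x) - H x) \<le> \<epsilon>"
    using assms(2) by (intro bexI[of _ "\<lambda>x. P (f x)"]) auto
qed

lemma uniformly_approximable_scaleR:
  fixes h :: "'a \<Rightarrow> real"
  assumes "uniformly_approximable K C h"
  shows "uniformly_approximable K ((\<lambda>P x. P x *\<^sub>R v) ` C) (\<lambda>x. h x *\<^sub>R v)"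
proof (rule uniformly_approximableI)
  fix \<epsilon> :: real assume "\<epsilon> > 0"
  have "norm v + 1 > 0"
    by (simp add: add_nonneg_pos)
  then have "\<epsilon> / (norm v + 1) > 0"
    using \<open>\<epsilon> > 0\<close> by simp
  then obtain P where "P \<in> C" and P: "\<forall>x\<in>K. norm (h x - P x) \<le> \<epsilon> / (norm v + 1)"
    using uniformly_approximableD[OF assms] by blast
  have "norm (h x *\<^sub>R v - P x *\<^sub>R v) \<le> \<epsilon>" if "x \<in> K" for x
  proof -
    have "norm (h x *\<^sub>R v - P x *\<^sub>R v) = norm (h x - P x) * norm v"
      unfolding scaleR_diff_left[symmetric] norm_scaleR real_norm_def ..
    also have "\<dots> \<le> \<epsilon> / (norm v + 1) * (norm v + 1)"
      using P that \<open>\<epsilon> > 0\<close> by (intro mult_mono) auto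
    also have "\<dots> = \<epsilon>"
      using \<open>norm v + 1 > 0\<close> by simp
    finally show ?thesis .
  qed
  then show "\<exists>H\<in>(\<lambda>P x. P x *\<^sub>R v) ` C. \<forall>x\<in>K. norm (h x *\<^sub>R v - H x) \<le> \<epsilon>"
    using \<open>P \<in> C\<close> by (intro bexI[of _ "\<lambda>x. P x *\<^sub>R v"]) auto
qed

lemma sum_lessThan_add:
  "(\<Sum>p<k + n. g p) = (\<Sum>p<k. g p) + (\<Sum>p<n. g (k + p))"
  for g :: "nat \<Rightarrow> 'b::comm_monoid_add"
  by (induction n) (simp_all add: add.assoc)

lemma hid_fun_upd_below:
  "j < l \<Longrightarrow> hid \<sigma> (ks(l := k)) (As(l := A)) (bs(l := b)) z j = hid \<sigma> ks As bs z j"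
  by (induction j) auto

lemma hid_fun_upd_top:
  assumes "l \<ge> 1"
  shows "hid \<sigma> (ks(l := k)) (As(l := A)) (bs(l := b)) z l =
    (\<lambda>i. \<sigma> ((\<Sum>p<ks (l - 1). A i p * hid \<sigma> ks As bs z (l - 1) p) - b i))"
proof -
  obtain j where l: "l = Suc j"
    using assms by (cases l) auto
  then show ?thesis
    by (simp add: hid_fun_upd_below)
qed

lemma NN_1_eq:
  "NN \<A> \<sigma> 1 = {H. \<exists>(k::nat) f w \<theta> Aout bout. (\<forall>i<k. f i \<in> \<A>) \<and>
      H = (\<lambda>x. (\<chi> r. \<Sum>p<k. Aout r p * \<sigma> (w p * f p x - \<theta> p)) - bout)}"
  unfolding NN_def
  by simp (intro Collect_cong iffI; (blast | (elim exE conjE, rule exI[of _ "\<lambda>_. _"], blast)))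

lemma NN_1_zero: "(\<lambda>x. 0) \<in> NN \<A> \<sigma> 1"
  unfolding NN_1_eq
  by (intro CollectI exI[of _ "0::nat"] exI[of _ 0]) (simp add: fun_eq_iff)

lemma NN_1_neuron:
  "f \<in> \<A> \<Longrightarrow> (\<lambda>x. (c * \<sigma> (w * f x - \<theta>)) *\<^sub>R v) \<in> NN \<A> \<sigma> 1"
  unfolding NN_1_eq
  by (intro CollectI exI[of _ 1] exI[of _ "\<lambda>_. f"] exI[of _ "\<lambda>_. w"] exI[of _ "\<lambda>_. \<theta>"]
      exI[of _ "\<lambda>r p. c * v $ r"] exI[of _ 0]) (auto simp: vec_eq_iff)

lemma NN_1_add:
  assumes "H1 \<in> NN \<A> \<sigma> 1" "H2 \<in> NN \<A> \<sigma> 1"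
  shows "(\<lambda>x. H1 x + H2 x) \<in> NN \<A> \<sigma> 1"
proof -
  obtain k1 :: nat and f1 w1 \<theta>1 A1 b1 where f1: "\<forall>i<k1. f1 i \<in> \<A>"
    and H1: "H1 = (\<lambda>x. (\<chi> r. \<Sum>p<k1. A1 r p * \<sigma> (w1 p * f1 p x - \<theta>1 p)) - b1)"
    using assms(1) unfolding NN_1_eq by blast
  obtain k2 :: nat and f2 w2 \<theta>2 A2 b2 where f2: "\<forall>i<k2. f2 i \<in> \<A>"
    and H2: "H2 = (\<lambda>x. (\<chi> r. \<Sum>p<k2. A2 r p * \<sigma> (w2 p * f2 p x - \<theta>2 p)) - b2)"
    using assms(2) unfolding NN_1_eq by blast
  define join :: "(nat \<Rightarrow> real) \<Rightarrow> (nat \<Rightarrow> real) \<Rightarrow> nat \<Rightarrow> real"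
    where "join a b p = (if p < k1 then a p else b (p - k1))" for a b p
  define f where "f p = (if p < k1 then f1 p else f2 (p - k1))" for p
  have "(\<lambda>x. H1 x + H2 x) = (\<lambda>x. (\<chi> r. \<Sum>p<k1 + k2. join (A1 r) (A2 r) p *
      \<sigma> (join w1 w2 p * f p x - join \<theta>1 \<theta>2 p)) - (b1 + b2))"
    unfolding H1 H2 by (auto simp: vec_eq_iff sum_lessThan_add join_def f_def intro!: sum.cong)
  moreover have "\<forall>i<k1 + k2. f i \<in> \<A>"
    using f1 f2 by (auto simp: f_def)
  ultimately show ?thesis
    unfolding NN_1_eq
    by (intro CollectI exI[of _ "k1 + k2"] exI[of _ f] exI[of _ "join w1 w2"]
        exI[of _ "join \<theta>1 \<theta>2"] exI[of _ "\<lambda>r. join (A1 r) (A2 r)"] exI[of _ "b1 + b2"] conjI)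
qed

lemma NN_1_sum:
  assumes "finite I" "\<And>i. i \<in> I \<Longrightarrow> F i \<in> NN \<A> \<sigma> 1"
  shows "(\<lambda>x. \<Sum>i\<in>I. F i x) \<in> NN \<A> \<sigma> 1"
  using assms
proof (induction I rule: finite_induct)
  case empty
  show ?case
    unfolding sum.empty by (rule NN_1_zero)
next
  case (insert i I)
  then have "F i \<in> NN \<A> \<sigma> 1" "(\<lambda>x. \<Sum>i\<in>I. F i x) \<in> NN \<A> \<sigma> 1"
    by auto
  then show ?case
    unfolding sum.insert[OF insert(1,2)] by (rule NN_1_add)
qed

lemma sum_bij_betw_pairs_fst_eq:
  fixes \<rho> :: "'i \<Rightarrow> 'm::finite \<times> 'j" and G :: "'m \<times> 'j \<Rightarrow> 'b::comm_ring_1"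
  assumes "bij_betw \<rho> S (UNIV \<times> T)"
  shows "(\<Sum>q\<in>S. (if fst (\<rho> q) = r then c (snd (\<rho> q)) else 0) * G (\<rho> q)) = (\<Sum>j\<in>T. c j * G (r, j))"
proof -
  have "(\<Sum>q\<in>S. (if fst (\<rho> q) = r then c (snd (\<rho> q)) else 0) * G (\<rho> q))
      = (\<Sum>(r', j)\<in>UNIV \<times> T. if r' = r then c j * G (r', j) else 0)"
    unfolding sum.reindex_bij_betw[OF assms, symmetric] by (intro sum.cong) (auto simp: case_prod_beta)
  also have "\<dots> = (\<Sum>j\<in>T. \<Sum>r'\<in>UNIV. if r' = r then c j * G (r', j) else 0)"
    unfolding sum.cartesian_product[symmetric] by (rule sum.swap)
  finally show ?thesis
    by simp
qed

lemma NN_append_layer: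
  fixes H :: "'a::topological_space \<Rightarrow> real ^ 'm::finite" and N :: nat
  assumes "H \<in> NN \<A> \<sigma> l" "l \<ge> 1"
  shows "(\<lambda>x. \<chi> r. \<Sum>j<N. c j * \<sigma> (\<alpha> j * H x $ r - \<beta> j)) \<in> NN \<A> \<sigma> (Suc l)"
proof -
  obtain ks f w \<theta> As bs Aout bout where f: "\<forall>i<ks 0. f i \<in> \<A>"
    and H: "H = (\<lambda>x. (\<chi> r. \<Sum>p<ks (l - 1).
                 Aout r p * hid \<sigma> ks As bs (\<lambda>i. w i * f i x - \<theta> i) (l - 1) p) - bout)"
    using assms(1) unfolding NN_def by blast
  define n where "n = CARD('m) * N"
  obtain \<rho> where \<rho>: "bij_betw \<rho> {..<n} ((UNIV :: 'm set) \<times> {..<N})"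
    using finite_same_card_bij[of "{..<n}" "(UNIV :: 'm set) \<times> {..<N}"]
    by (auto simp: n_def card_cartesian_product)
  \<comment> \<open>The new hidden layer has one neuron for each pair (r, j), enumerated by \<open>\<rho>\<close>; neuron (r, j)
    absorbs row r of the old output layer into its weights and computes \<open>\<sigma> (\<alpha> j * H x $ r - \<beta> j)\<close>.\<close>
  define A where "A q p = \<alpha> (snd (\<rho> q)) * Aout (fst (\<rho> q)) p" for q p
  define b where "b q = \<alpha> (snd (\<rho> q)) * bout $ fst (\<rho> q) + \<beta> (snd (\<rho> q))" for q
  define Aout' :: "'m \<Rightarrow> nat \<Rightarrow> real"
    where "Aout' r q = (if fst (\<rho> q) = r then c (snd (\<rho> q)) else 0)" for r q
  have top: "hid \<sigma> (ks(l := n)) (As(l := A)) (bs(l := b)) (\<lambda>i. w i * f i x - \<theta> i) l q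
      = \<sigma> (\<alpha> (snd (\<rho> q)) * H x $ fst (\<rho> q) - \<beta> (snd (\<rho> q)))" for x q
    unfolding hid_fun_upd_top[OF assms(2)] H A_def b_def
    by (simp add: sum_distrib_left right_diff_distrib mult.assoc diff_diff_eq)
  have out: "(\<Sum>q<n. Aout' r q * \<sigma> (\<alpha> (snd (\<rho> q)) * H x $ fst (\<rho> q) - \<beta> (snd (\<rho> q))))
      = (\<Sum>j<N. c j * \<sigma> (\<alpha> j * H x $ r - \<beta> j))" for x r
    unfolding Aout'_def
    using sum_bij_betw_pairs_fst_eq[OF \<rho>, where G = "\<lambda>(r', j). \<sigma> (\<alpha> j * H x $ r' - \<beta> j)"]
    by (simp add: case_prod_beta)
  have "(\<lambda>x. \<chi> r. \<Sum>j<N. c j * \<sigma> (\<alpha> j * H x $ r - \<beta> j)) =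
      (\<lambda>x. (\<chi> r. \<Sum>q<(ks(l := n)) (Suc l - 1).
         Aout' r q * hid \<sigma> (ks(l := n)) (As(l := A)) (bs(l := b)) (\<lambda>i. w i * f i x - \<theta> i) (Suc l - 1) q) - 0)"
    by (simp add: top out)
  moreover have "\<forall>i<(ks(l := n)) 0. f i \<in> \<A>"
    using f assms(2) by simp
  ultimately show ?thesis
    unfolding NN_def by blast
qed

lemma NN_1_uniformly_approximable_sum:
  assumes "finite I" "\<And>i. i \<in> I \<Longrightarrow> uniformly_approximable K (NN \<A> \<sigma> 1) (F i)"
  shows "uniformly_approximable K (NN \<A> \<sigma> 1) (\<lambda>x. \<Sum>i\<in>I. F i x)"
  using assms(1) NN_1_zero NN_1_add assms(2) by (rule uniformly_approximable_sum)

definition superpositions :: "('a \<Rightarrow> real) set \<Rightarrow> ('a \<Rightarrow> real) set" where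
  "superpositions \<A> =
    {\<lambda>x. \<Sum>i<M. u i (f i x) | (M::nat) f u. \<forall>i<M. f i \<in> \<A> \<and> continuous_on UNIV (u i)}"

definition univariate_nets :: "(real \<Rightarrow> real) \<Rightarrow> (real \<Rightarrow> real) set" where
  "univariate_nets \<sigma> = {\<lambda>t. \<Sum>j<N. c j * \<sigma> (w j * t - \<theta> j) | (N::nat) c w \<theta>. True}"

lemma D_property_uniformly_approximable:
  fixes g :: "'a::topological_space \<Rightarrow> real"
  assumes "D_property \<A>" "compact K" "continuous_on K g"
  shows "uniformly_approximable K (superpositions \<A>) g"
proof (rule uniformly_approximableI)
  fix \<epsilon> :: real assume "\<epsilon> > 0"
  then have "\<exists>M f u. (\<forall>i<(M::nat). f i \<in> \<A> \<and> continuous_on UNIV (u i :: real \<Rightarrow> real)) \<and>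
      (\<exists>\<delta><\<epsilon>. \<forall>x\<in>K. \<bar>g x - (\<Sum>i<M. u i (f i x))\<bar> \<le> \<delta>)"
    using assms unfolding D_property_def by blast
  then obtain M f u \<delta> where fu: "\<forall>i<(M::nat). f i \<in> \<A> \<and> continuous_on UNIV (u i :: real \<Rightarrow> real)"
    and "\<delta> < \<epsilon>" "\<forall>x\<in>K. \<bar>g x - (\<Sum>i<M. u i (f i x))\<bar> \<le> \<delta>"
    by blast
  then have "\<forall>x\<in>K. norm (g x - (\<Sum>i<M. u i (f i x))) \<le> \<epsilon>"
    by fastforce
  moreover have "(\<lambda>x. \<Sum>i<M. u i (f i x)) \<in> superpositions \<A>"
    using fu unfolding superpositions_def by blast
  ultimately show "\<exists>H\<in>superpositions \<A>. \<forall>x\<in>K. norm (g x - H x) \<le> \<epsilon>"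
    by (intro bexI[of _ "\<lambda>x. \<Sum>i<M. u i (f i x)"])
qed

lemma univariate_UAP_uniformly_approximable:
  assumes "univariate_UAP \<sigma>" "continuous_on {a..b} u"
  shows "uniformly_approximable {a..b} (univariate_nets \<sigma>) u"
proof (rule uniformly_approximableI)
  fix \<epsilon> :: real assume "\<epsilon> > 0"
  then have "\<exists>N c w \<theta>. \<exists>\<delta><\<epsilon>.
      \<forall>t\<in>{a..b}. \<bar>u t - (\<Sum>j<(N::nat). c j * \<sigma> (w j * t - \<theta> j))\<bar> \<le> \<delta>"
    using assms unfolding univariate_UAP_def by blast
  then obtain N c w \<theta> \<delta> where "\<delta> < \<epsilon>"
    and "\<forall>t\<in>{a..b}. \<bar>u t - (\<Sum>j<(N::nat). c j * \<sigma> (w j * t - \<theta> j))\<bar> \<le> \<delta>"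
    by blast
  then have "\<forall>t\<in>{a..b}. norm (u t - (\<Sum>j<N. c j * \<sigma> (w j * t - \<theta> j))) \<le> \<epsilon>"
    by fastforce
  moreover have "(\<lambda>t. \<Sum>j<N. c j * \<sigma> (w j * t - \<theta> j)) \<in> univariate_nets \<sigma>"
    unfolding univariate_nets_def by blast
  ultimately show "\<exists>P\<in>univariate_nets \<sigma>. \<forall>t\<in>{a..b}. norm (u t - P t) \<le> \<epsilon>"
    by (intro bexI[of _ "\<lambda>t. \<Sum>j<N. c j * \<sigma> (w j * t - \<theta> j)"])
qed

lemma NN_1_approximates_comp:
  assumes "univariate_UAP \<sigma>" "f \<in> \<A>" "continuous_on UNIV f" "continuous_on UNIV u" "compact K"
  shows "uniformly_approximable K (NN \<A> \<sigma> 1) (\<lambda>x. u (f x) *\<^sub>R v)"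
proof -
  have "bounded (f ` K)"
    using assms(3,5) by (meson compact_continuous_image compact_imp_bounded continuous_on_subset subset_UNIV)
  then obtain B where "\<forall>x\<in>K. \<bar>f x\<bar> \<le> B"
    unfolding bounded_iff by auto
  then have "f ` K \<subseteq> {-B..B}"
    by (auto simp: abs_le_iff)
  moreover have "uniformly_approximable {-B..B} (univariate_nets \<sigma>) u"
    using assms(1,4) continuous_on_subset by (blast intro: univariate_UAP_uniformly_approximable)
  ultimately have "uniformly_approximable K
      ((\<lambda>P x. P x *\<^sub>R v) ` (\<lambda>P x. P (f x)) ` univariate_nets \<sigma>) (\<lambda>x. u (f x) *\<^sub>R v)"
    by (intro uniformly_approximable_scaleR uniformly_approximable_comp)
  moreover have "(\<lambda>P x. P x *\<^sub>R v) ` (\<lambda>P x. P (f x)) ` univariate_nets \<sigma> \<subseteq> NN \<A> \<sigma> 1"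
  proof
    fix H assume "H \<in> (\<lambda>P x. P x *\<^sub>R v) ` (\<lambda>P x. P (f x)) ` univariate_nets \<sigma>"
    then obtain N c w \<theta> where H: "H = (\<lambda>x. \<Sum>j<(N::nat). (c j * \<sigma> (w j * f x - \<theta> j)) *\<^sub>R v)"
      by (auto simp: univariate_nets_def scaleR_sum_left)
    show "H \<in> NN \<A> \<sigma> 1"
      unfolding H by (intro NN_1_sum NN_1_neuron assms(2) finite_lessThan)
  qed
  ultimately show ?thesis
    by (rule uniformly_approximable_mono)
qed

lemma NN_1_approximates:
  fixes g :: "'a::topological_space \<Rightarrow> real ^ 'm::finite"
  assumes "\<forall>f\<in>\<A>. continuous_on UNIV f" "D_property \<A>" "univariate_UAP \<sigma>"
    and "compact K" "continuous_on K g"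
  shows "uniformly_approximable K (NN \<A> \<sigma> 1) g"
proof -
  have "uniformly_approximable K (NN \<A> \<sigma> 1) (\<lambda>x. g x $ r *\<^sub>R axis r 1)" for r
  proof (rule uniformly_approximable_trans)
    show "uniformly_approximable K ((\<lambda>P x. P x *\<^sub>R axis r 1) ` superpositions \<A>)
        (\<lambda>x. g x $ r *\<^sub>R axis r 1)"
      using assms(2,4,5) by (intro uniformly_approximable_scaleR D_property_uniformly_approximable)
        (auto intro: continuous_intros)
  next
    fix H :: "'a \<Rightarrow> real ^ 'm"
    assume "H \<in> (\<lambda>P x. P x *\<^sub>R axis r 1) ` superpositions \<A>"
    then obtain M f u where fu: "\<forall>i<(M::nat). f i \<in> \<A> \<and> continuous_on UNIV (u i :: real \<Rightarrow> real)"
      and H: "H = (\<lambda>x. \<Sum>i<M. u i (f i x) *\<^sub>R axis r 1)"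
      by (auto simp: superpositions_def scaleR_sum_left)
    show "uniformly_approximable K (NN \<A> \<sigma> 1) H"
      unfolding H using fu assms(1,3,4)
      by (intro NN_1_uniformly_approximable_sum NN_1_approximates_comp) auto
  qed
  then have "uniformly_approximable K (NN \<A> \<sigma> 1) (\<lambda>x. \<Sum>r\<in>UNIV. g x $ r *\<^sub>R axis r 1)"
    by (rule NN_1_uniformly_approximable_sum[OF finite_class.finite_UNIV])
  then show ?thesis
    by (simp add: basis_expansion flip: scalar_mult_eq_scaleR)
qed

lemma NN_Suc_approximates_bounded:
  fixes H :: "'a::topological_space \<Rightarrow> real ^ 'm::finite"
  assumes "univariate_UAP \<sigma>" "H \<in> NN \<A> \<sigma> l" "l \<ge> 1" "bounded (H ` K)"
  shows "uniformly_approximable K (NN \<A> \<sigma> (Suc l)) H"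
proof (rule uniformly_approximableI)
  fix \<epsilon> :: real assume "\<epsilon> > 0"
  obtain B where B: "\<And>x. x \<in> K \<Longrightarrow> norm (H x) \<le> B"
    using assms(4) unfolding bounded_iff by blast
  have "\<epsilon> / CARD('m) > 0"
    using \<open>\<epsilon> > 0\<close> by simp
  with univariate_UAP_uniformly_approximable[OF assms(1) continuous_on_id]
  have "\<exists>P\<in>univariate_nets \<sigma>. \<forall>t\<in>{-B..B}. norm (t - P t) \<le> \<epsilon> / CARD('m)"
    by (rule uniformly_approximableD)
  then obtain N c \<alpha> \<beta> where approx_id:
    "\<forall>t\<in>{-B..B}. \<bar>t - (\<Sum>j<(N::nat). c j * \<sigma> (\<alpha> j * t - \<beta> j))\<bar> \<le> \<epsilon> / CARD('m)"
    unfolding univariate_nets_def by fastforce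
  define H' where "H' x = (\<chi> r. \<Sum>j<N. c j * \<sigma> (\<alpha> j * H x $ r - \<beta> j))" for x
  have "H' \<in> NN \<A> \<sigma> (Suc l)"
    unfolding H'_def by (rule NN_append_layer[OF assms(2,3)])
  moreover have "norm (H x - H' x) \<le> \<epsilon>" if "x \<in> K" for x
  proof -
    have "H x $ r \<in> {-B..B}" for r
      using component_le_norm_cart[of "H x" r] B[OF that] by auto
    have "norm (H x - H' x) \<le> (\<Sum>r\<in>UNIV. \<bar>H x $ r - H' x $ r\<bar>)"
      using norm_le_l1_cart[of "H x - H' x"] by simp
    also have "\<dots> \<le> (\<Sum>r\<in>(UNIV::'m set). \<epsilon> / CARD('m))"
      unfolding H'_def using approx_id \<open>\<And>r. H x $ r \<in> {-B..B}\<close> by (intro sum_mono) auto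
    also have "\<dots> = \<epsilon>"
      by simp
    finally show ?thesis .
  qed
  ultimately show "\<exists>H'\<in>NN \<A> \<sigma> (Suc l). \<forall>x\<in>K. norm (H x - H' x) \<le> \<epsilon>"
    by (intro bexI[of _ H'] ballI)
qed

lemma NN_approximates:
  fixes g :: "'a::topological_space \<Rightarrow> real ^ 'm::finite"
  assumes "\<forall>f\<in>\<A>. continuous_on UNIV f" "D_property \<A>" "univariate_UAP \<sigma>"
    and "l \<ge> 1" "compact K" "continuous_on K g"
  shows "uniformly_approximable K (NN \<A> \<sigma> l) g"
  using \<open>l \<ge> 1\<close>
proof (induction l rule: nat_induct_at_least)
  case base
  show ?case
    using NN_1_approximates[OF assms(1-3,5,6)] .
next
  case (Suc l)
  have "bounded (g ` K)"
    using assms(5,6) by (simp add: compact_continuous_image compact_imp_bounded)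
  with Suc.IH have "uniformly_approximable K {H \<in> NN \<A> \<sigma> l. bounded (H ` K)} g"
    by (rule uniformly_approximable_bounded)
  then show ?case
    by (rule uniformly_approximable_trans) (use assms(3) Suc.hyps NN_Suc_approximates_bounded in blast)
qed

theorem theorem2p1:
  fixes \<A> :: "('a::topological_space \<Rightarrow> real) set"
    and \<sigma> :: "real \<Rightarrow> real"
  assumes "\<forall>f\<in>\<A>. continuous_on UNIV f"
    and "D_property \<A>"
    and "univariate_UAP \<sigma>"
  shows "(\<forall>K (g :: 'a \<Rightarrow> real ^ 'm::finite) \<epsilon>.
            compact K \<and> continuous_on K g \<and> \<epsilon> > 0 \<longrightarrow>
            (\<exists>H\<in>NN \<A> \<sigma> 1. \<exists>\<delta><\<epsilon>. \<forall>x\<in>K. norm (g x - H x) \<le> \<delta>))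
       \<and> (\<forall>l\<ge>1. \<forall>K (g :: 'a \<Rightarrow> real ^ 'm) \<epsilon>.
            compact K \<and> continuous_on K g \<and> \<epsilon> > 0 \<longrightarrow>
            (\<exists>H\<in>NN \<A> \<sigma> l. \<exists>\<delta><\<epsilon>. \<forall>x\<in>K. norm (g x - H x) \<le> \<delta>))"
proof -
  have "\<exists>H\<in>NN \<A> \<sigma> l. \<exists>\<delta><\<epsilon>. \<forall>x\<in>K. norm (g x - H x) \<le> \<delta>"
    if "l \<ge> 1" "compact K" "continuous_on K g" "\<epsilon> > 0" for l K \<epsilon> and g :: "'a \<Rightarrow> real ^ 'm"
    using uniformly_approximable_strict[OF NN_approximates[OF assms that(1-3)] that(4)] .
  then show ?thesis
    by auto
qed

end
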